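(* Let $B$ be a nonzero proper Borel ideal of $S=k[x_1,\dots,x_n]$ generated in degrees at most $d$. For $0\le s\le d-1$ let $M_s$ be the set of monomials of degree $s$ that are minimal monomial generators of $\operatorname{trunc}_s(B)$ and do not lie in $B$, and for $m\in M_s$ let $Z_m=\{x_j: mx_j\notin\operatorname{trunc}_{s+1}(B)\}$. Then, as $k$-vector spaces, \[S/B=\bigoplus_{s=0}^{d-1}\ \bigoplus_{m\in M_s} m\cdot k[Z_m],\] i.e. the set of monomials of $S$ not in $B$ is the disjoint union over $s$ and $m\in M_s$ of the sets $\{mu: u \text{ a monomial in the variables } Z_m\}$, and none of these monomials lies in $B$.
   Context: For a monomial $m$ with factorization $x_{i_1}\cdots x_{i_r}$ ($i_1\le\dots\le i_r$), $\operatorname{trunc}_d(m)=x_{i_1}\cdots x_{i_d}$ if $d\le r$ and $=m$ if $d>r$; for a monomial ideal $I$, $\operatorname{trunc}_d(I)$ is the ideal generated by the $d$-truncations of the monomials of $I$; in particular $\operatorname{trunc}_0(B)=(1)$. A Borel ideal is a monomial ideal closed under Borel moves $m\mapsto m\frac{x_{i_1}}{x_{j_1}}\cdots\frac{x_{i_s}}{x_{j_s}}$ ($i_t<j_t$, all $x_{j_t}\mid m$). For a monomial $f$ and a set $Z$ of variables, $f\cdot k[Z]$ is the $k$-span of $\{fu : u$ a monomial in $Z\}$. *)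

theory Defs
  imports Main "HOL-Library.Multiset" "HOL-Library.Disjoint_Sets"
begin

(* A monomial of S = k[x_0,...,x_{n-1}] is represented by the multiset of
 indices of its variables (x_{i_1}...x_{i_r} corresponds to {#i_1,...,i_r#}).
 Divisibility is multiset inclusion, multiplication is multiset sum,
 degree is size, 1 is the empty multiset. *)

definition monoms :: "nat \<Rightarrow> nat multiset set" where
  "monoms n = {m. \<forall>i\<in>#m. i < n}"

(* A monomial ideal is identified with its set of monomials. *)
definition monomial_ideal :: "nat \<Rightarrow> nat multiset set \<Rightarrow> bool" where
  "monomial_ideal n I \<longleftrightarrow> I \<subseteq> monoms n \<and>
     (\<forall>m\<in>I. \<forall>u\<in>monoms n. m + u \<in> I)"

definition ideal_gen :: "nat \<Rightarrow> nat multiset set \<Rightarrow> nat multiset set" where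
  "ideal_gen n G = {m \<in> monoms n. \<exists>g\<in>G. g \<subseteq># m}"

(* Borel move: replace variables x_{j_t} (whose product divides m) by x_{i_t}, i_t < j_t. *)
definition borel_move :: "nat multiset \<Rightarrow> (nat \<times> nat) list \<Rightarrow> nat multiset" where
  "borel_move m ps = m - mset (map snd ps) + mset (map fst ps)"

definition borel_ideal :: "nat \<Rightarrow> nat multiset set \<Rightarrow> bool" where
  "borel_ideal n B \<longleftrightarrow> monomial_ideal n B \<and>
     (\<forall>m\<in>B. \<forall>ps. (\<forall>(i,j)\<in>set ps. i < j) \<and> mset (map snd ps) \<subseteq># m
        \<longrightarrow> borel_move m ps \<in> B)"

definition generated_in_degrees_le :: "nat multiset set \<Rightarrow> nat \<Rightarrow> bool" where
  "generated_in_degrees_le I d \<longleftrightarrow> (\<forall>m\<in>I. \<exists>g\<in>I. g \<subseteq># m \<and> size g \<le> d)"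

definition trunc :: "nat \<Rightarrow> nat multiset \<Rightarrow> nat multiset" where
  "trunc d m = mset (take d (sorted_list_of_multiset m))"

definition trunc_ideal :: "nat \<Rightarrow> nat \<Rightarrow> nat multiset set \<Rightarrow> nat multiset set" where
  "trunc_ideal n d I = ideal_gen n (trunc d ` I)"

definition min_gens :: "nat multiset set \<Rightarrow> nat multiset set" where
  "min_gens I = {m \<in> I. \<forall>m'\<in>I. m' \<subseteq># m \<longrightarrow> m' = m}"

definition Mset :: "nat \<Rightarrow> nat multiset set \<Rightarrow> nat \<Rightarrow> nat multiset set" where
  "Mset n B s = {m \<in> min_gens (trunc_ideal n s B). size m = s \<and> m \<notin> B}"

definition Zvars :: "nat \<Rightarrow> nat multiset set \<Rightarrow> nat \<Rightarrow> nat multiset \<Rightarrow> nat set" where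
  "Zvars n B s m = {j. j < n \<and> m + {#j#} \<notin> trunc_ideal n (Suc s) B}"

definition cell :: "nat multiset \<Rightarrow> nat set \<Rightarrow> nat multiset set" where
  "cell m Z = {m + u | u. set_mset u \<subseteq> Z}"

end

theory Submission
  imports Defs
begin

(* Write u\<le>\<^sub>B w ("w is Borel above u") if deg u \<le> deg w and, for every x,
   w has at least as many factors of index \<le> x as u.  A Borel ideal B is closed
   upwards under \<le>\<^sub>B (lemma borel_ideal_upward): pairing the sorted factors of u
   with the first deg u sorted factors of w yields a Borel move into a divisor of w.
   From this, every truncation ideal T_s = trunc_s(B) is again closed upwards under \<le>\<^sub>B,
   and trunc_s u \<in> T_s implies trunc_t u \<in> T_t for all t \<le> s.
   For a monomial u \<notin> B let s be the largest index with trunc_s u \<in> T_s; then s < d,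
   m = trunc_s u lies in M_s and the remaining factors of u all lie in Z_m, so u lies in
   the cell m\<cdot>k[Z_m] (lemma complement_covered_by_cells).  Conversely every variable of
   Z_m exceeds all factors of m, so trunc_s recovers m from any element mv of its cell
   and trunc_{s+1}(mv) \<notin> T_{s+1} for v \<noteq> 1; this shows that the cells avoid B and
   that cells with different (s, m) are disjoint. *)

(* The number of factors x_i of m with i \<le> x.  Borel moves can only increase these
   counts; comparing them is how the Borel order below is defined. *)
definition count_le :: "nat \<Rightarrow> nat multiset \<Rightarrow> nat" where
  "count_le x m = size (filter_mset (\<lambda>y. y \<le> x) m)"

lemma count_le_mset: "count_le x (mset xs) = length (filter (\<lambda>y. y \<le> x) xs)"
  unfolding count_le_def by (metis mset_filter size_mset)

lemma count_le_plus [simp]: "count_le x (a + b) = count_le x a + count_le x b"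
  unfolding count_le_def by simp

lemma count_le_add_mset [simp]:
  "count_le x (add_mset j m) = count_le x m + (if j \<le> x then 1 else 0)"
  unfolding count_le_def by simp

lemma count_le_le_size: "count_le x a \<le> size a"
  unfolding count_le_def by simp

lemma count_le_mono: "a \<subseteq># b \<Longrightarrow> count_le x a \<le> count_le x b"
  unfolding count_le_def by (simp add: multiset_filter_mono size_mset_mono)

lemma count_le_pos:
  assumes "z \<in># a"
  shows "0 < count_le z a"
proof -
  have "z \<in># filter_mset (\<lambda>y. y \<le> z) a" using assms by simp
  then show ?thesis unfolding count_le_def by (metis multi_member_split size_add_mset zero_less_Suc)
qed

lemma count_le_eq_size_iff: "count_le x a = size a \<longleftrightarrow> (\<forall>y\<in>#a. y \<le> x)"
proof
  assume full: "count_le x a = size a"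
  show "\<forall>y\<in>#a. y \<le> x"
  proof (rule ccontr)
    assume "\<not> (\<forall>y\<in>#a. y \<le> x)"
    then have "size (filter_mset (\<lambda>y. y \<le> x) a) < size a"
      by (auto intro: size_filter_unsat_elem)
    then show False using full unfolding count_le_def by simp
  qed
next
  assume "\<forall>y\<in>#a. y \<le> x"
  then show "count_le x a = size a"
    unfolding count_le_def by (metis filter_mset_cong filter_mset_True)
qed

lemma count_le_zero: "(\<And>y. y \<in># a \<Longrightarrow> x < y) \<Longrightarrow> count_le x a = 0"
  unfolding count_le_def by (auto simp: not_le)

lemma sorted_nth_le_iff:
  assumes "sorted (xs::nat list)" "i < length xs"
  shows "xs ! i \<le> x \<longleftrightarrow> i < length (filter (\<lambda>y. y \<le> x) xs)"
  using assms
proof (induction xs arbitrary: i)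
  case (Cons a xs)
  show ?case
  proof (cases "a \<le> x")
    case True
    then show ?thesis using Cons by (cases i) auto
  next
    case False
    have "a \<le> (a # xs) ! i"
      using Cons.prems by (cases i) (auto simp: nth_mem)
    moreover have "\<forall>y\<in>set (a # xs). \<not> y \<le> x" using False Cons.prems(1) by auto
    ultimately show ?thesis using False by (simp add: filter_empty_conv)
  qed
qed simp

(* The entries \<le> x of a sorted list form a prefix, so a prefix of length k contains
   min k (their number) of them. *)
lemma sorted_filter_take:
  assumes "sorted (xs::nat list)"
  shows "length (filter (\<lambda>y. y \<le> x) (take k xs)) = min k (length (filter (\<lambda>y. y \<le> x) xs))"
  using assms
proof (induction xs arbitrary: k)
  case (Cons a xs)
  show ?case
  proof (cases "a \<le> x")
    case True
    then show ?thesis using Cons by (cases k) auto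
  next
    case False
    then have "\<forall>y\<in>set (a # xs). \<not> y \<le> x" using Cons.prems by auto
    then show ?thesis by (auto simp: filter_empty_conv dest: in_set_takeD)
  qed
qed simp

lemma length_sorted_list_of_multiset: "length (sorted_list_of_multiset m) = size m"
  by (metis mset_sorted_list_of_multiset size_mset)

lemma subset_mset_size_eq: "a \<subseteq># b \<Longrightarrow> size b \<le> size a \<Longrightarrow> a = b"
  using mset_subset_size subset_mset.le_less by fastforce

lemma size_trunc: "size (trunc k m) = min k (size m)"
  unfolding trunc_def by (simp add: length_sorted_list_of_multiset)

lemma trunc_subset: "trunc k m \<subseteq># m"
  unfolding trunc_def
  by (metis append_take_drop_id mset_append mset_sorted_list_of_multiset mset_subset_eq_add_left)

lemma count_le_trunc: "count_le x (trunc k m) = min k (count_le x m)"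
  unfolding trunc_def count_le_mset
  by (metis count_le_mset mset_sorted_list_of_multiset sorted_filter_take sorted_sorted_list_of_multiset)

lemma trunc_id: "size m \<le> k \<Longrightarrow> trunc k m = m"
  unfolding trunc_def by (simp add: length_sorted_list_of_multiset)

lemma trunc_append:
  assumes "size a = k" "\<And>y z. y \<in># a \<Longrightarrow> z \<in># b \<Longrightarrow> y \<le> z"
  shows "trunc k (a + b) = a"
proof -
  let ?xs = "sorted_list_of_multiset a" and ?ys = "sorted_list_of_multiset b"
  have "sorted (?xs @ ?ys)" using assms(2) by (simp add: sorted_append)
  then have "sorted_list_of_multiset (a + b) = ?xs @ ?ys"
    by (metis mset_append mset_sorted_list_of_multiset sorted_list_of_multiset_mset sorted_sort_id)
  then show ?thesis unfolding trunc_def using assms(1)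
    by (metis append_eq_conv_conj mset_sorted_list_of_multiset size_mset)
qed

section \<open>The Borel order\<close>

(* borel_le a b: b is at least as large as a and has at least as many small factors
   for every threshold; equivalently b is divisible by a Borel move of a. *)
definition borel_le :: "nat multiset \<Rightarrow> nat multiset \<Rightarrow> bool" where
  "borel_le a b \<longleftrightarrow> size a \<le> size b \<and> (\<forall>x. count_le x a \<le> count_le x b)"

lemma borel_le_subset: "a \<subseteq># b \<Longrightarrow> borel_le a b"
  unfolding borel_le_def by (simp add: count_le_mono size_mset_mono)

lemma borel_le_trans: "borel_le a b \<Longrightarrow> borel_le b c \<Longrightarrow> borel_le a c"
  unfolding borel_le_def by (meson le_trans)

lemma borel_le_trunc:
  assumes "a \<subseteq># u" "size a \<le> k"
  shows "borel_le a (trunc k u)"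
proof -
  have "count_le x a \<le> k" for x using count_le_le_size[of x a] assms(2) by linarith
  then show ?thesis
    unfolding borel_le_def using count_le_mono[OF assms(1)] assms size_mset_mono
    by (auto simp: size_trunc count_le_trunc)
qed

lemma borel_le_trunc_mono:
  assumes "borel_le (trunc s g) (trunc s w)" "t \<le> s"
  shows "borel_le (trunc t g) (trunc t w)"
proof -
  have "min s (size g) \<le> min s (size w)" "\<And>x. min s (count_le x g) \<le> min s (count_le x w)"
    using assms(1) unfolding borel_le_def by (auto simp: size_trunc count_le_trunc)
  then have "min t (size g) \<le> min t (size w)" "\<And>x. min t (count_le x g) \<le> min t (count_le x w)"
    using assms(2) by (metis min.absorb1 min.bounded_iff min.cobounded1 min_def)+
  then show ?thesis unfolding borel_le_def by (auto simp: size_trunc count_le_trunc)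
qed

lemma borel_le_nth:
  assumes "borel_le g h" "i < size g"
  shows "sorted_list_of_multiset h ! i \<le> sorted_list_of_multiset g ! i"
proof -
  let ?a = "sorted_list_of_multiset g" and ?b = "sorted_list_of_multiset h"
  define x where "x = ?a ! i"
  have "i < count_le x g"
    using sorted_nth_le_iff[of ?a i x] assms(2) count_le_mset[of x ?a]
    by (simp add: length_sorted_list_of_multiset x_def)
  also have "\<dots> \<le> count_le x h" using assms(1) unfolding borel_le_def by simp
  finally have "i < length (filter (\<lambda>y. y \<le> x) ?b)" using count_le_mset[of x ?b] by simp
  moreover have "i < length ?b"
    using assms unfolding borel_le_def by (simp add: length_sorted_list_of_multiset)
  ultimately show ?thesis using sorted_nth_le_iff[of ?b i x] by (simp add: x_def)
qed

lemma monoms_subset: "h \<in> monoms n \<Longrightarrow> a \<subseteq># h \<Longrightarrow> a \<in> monoms n"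
  unfolding monoms_def by (auto dest: mset_subset_eqD)

lemma monoms_plus: "a \<in> monoms n \<Longrightarrow> b \<in> monoms n \<Longrightarrow> a + b \<in> monoms n"
  unfolding monoms_def by auto

lemma borel_ideal_subset_monoms: "borel_ideal n B \<Longrightarrow> B \<subseteq> monoms n"
  unfolding borel_ideal_def monomial_ideal_def by blast

lemma monomial_ideal_upward:
  assumes "monomial_ideal n I" "g \<in> I" "h \<in> monoms n" "g \<subseteq># h"
  shows "h \<in> I"
proof -
  have "h - g \<in> monoms n" using monoms_subset assms(3) by (metis diff_subset_eq_self)
  then have "g + (h - g) \<in> I" using assms(1,2) unfolding monomial_ideal_def by blast
  then show ?thesis using assms(4) by (metis subset_mset.add_diff_inverse)
qed

lemma borel_ideal_dvd:
  "borel_ideal n B \<Longrightarrow> g \<in> B \<Longrightarrow> h \<in> monoms n \<Longrightarrow> g \<subseteq># h \<Longrightarrow> h \<in> B"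
  unfolding borel_ideal_def using monomial_ideal_upward by blast

(* The i-th sorted factor of g is replaced by the i-th sorted factor of h (which is not
   larger); the moves with unequal indices form a Borel move turning g into a divisor
   of h. *)
theorem borel_ideal_upward:
  assumes B: "borel_ideal n B" and g: "g \<in> B" and h: "h \<in> monoms n" and le: "borel_le g h"
  shows "h \<in> B"
proof -
  let ?a = "sorted_list_of_multiset g" and ?b = "sorted_list_of_multiset h"
  define k where "k = size g"
  define zs where "zs = zip (take k ?b) ?a"
  have lens: "length (take k ?b) = length ?a"
    using le unfolding borel_le_def by (simp add: length_sorted_list_of_multiset k_def)
  have pairs_le: "p \<le> q" if pq: "(p, q) \<in> set zs" for p q
  proof -
    obtain i where "i < length zs" "zs ! i = (p, q)" using pq unfolding in_set_conv_nth by blast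
    then have "i < k" "p = ?b ! i" "q = ?a ! i"
      using lens unfolding zs_def by (auto simp: length_sorted_list_of_multiset k_def)
    then show "p \<le> q" using borel_le_nth[OF le] k_def by simp
  qed
  define M where "M = mset zs"
  define moving where "moving = (\<lambda>(p::nat, q::nat). p < q)"
  define ps where "ps = filter moving zs"
  have g_eq: "g = image_mset snd M"
    using lens unfolding M_def by (metis mset_map map_snd_zip mset_sorted_list_of_multiset zs_def)
  have prefix_eq: "mset (take k ?b) = image_mset fst M"
    using lens unfolding M_def by (metis mset_map map_fst_zip zs_def)
  have split: "image_mset f M = image_mset f (filter_mset moving M)
                                + image_mset f (filter_mset (\<lambda>x. \<not> moving x) M)" for f
    by (metis image_mset_union multiset_partition)
  have fixed: "image_mset snd (filter_mset (\<lambda>x. \<not> moving x) M)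
             = image_mset fst (filter_mset (\<lambda>x. \<not> moving x) M)"
  proof (rule image_mset_cong)
    fix x assume "x \<in># filter_mset (\<lambda>x. \<not> moving x) M"
    then have "x \<in> set zs" "\<not> moving x" unfolding M_def by auto
    then show "snd x = fst x" using pairs_le[of "fst x" "snd x"] unfolding moving_def by (cases x) auto
  qed
  have snd_ps: "mset (map snd ps) = image_mset snd (filter_mset moving M)"
    and fst_ps: "mset (map fst ps) = image_mset fst (filter_mset moving M)"
    unfolding ps_def M_def by simp_all
  have "\<forall>(i,j)\<in>set ps. i < j" unfolding ps_def moving_def by auto
  moreover have "mset (map snd ps) \<subseteq># g"
    unfolding snd_ps using split[of snd] g_eq by (metis mset_subset_eq_add_left)
  ultimately have "borel_move g ps \<in> B" using B g unfolding borel_ideal_def by blast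
  moreover have "borel_move g ps = mset (take k ?b)"
  proof -
    have "borel_move g ps = image_mset snd (filter_mset (\<lambda>x. \<not> moving x) M)
                            + image_mset fst (filter_mset moving M)"
      unfolding borel_move_def snd_ps fst_ps using split[of snd] g_eq by simp
    also have "\<dots> = mset (take k ?b)" using split[of fst] fixed prefix_eq by (simp add: add.commute)
    finally show ?thesis .
  qed
  moreover have "mset (take k ?b) \<subseteq># h"
    by (metis append_take_drop_id mset_append mset_sorted_list_of_multiset mset_subset_eq_add_left)
  ultimately show ?thesis using borel_ideal_dvd[OF B _ h] by simp
qed

section \<open>Truncation ideals of a Borel ideal\<close>

lemma mem_trunc_ideal:
  "w \<in> trunc_ideal n s B \<longleftrightarrow> w \<in> monoms n \<and> (\<exists>g\<in>B. trunc s g \<subseteq># w)"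
  unfolding trunc_ideal_def ideal_gen_def by auto

lemma trunc_mem_trunc_ideal:
  assumes "borel_ideal n B" "g \<in> B"
  shows "trunc s g \<in> trunc_ideal n s B"
proof -
  have "trunc s g \<in> monoms n"
    using assms borel_ideal_subset_monoms monoms_subset trunc_subset by blast
  then show ?thesis unfolding mem_trunc_ideal using assms(2) by blast
qed

(* A monomial w Borel above trunc_s g (g \<in> B) lies in T_s: if deg g > s, replace the first
   s factors of g by the first s factors of w; the result g' is Borel above g, hence in B,
   and trunc_s g' divides w. *)
lemma trunc_ideal_upward_gen:
  assumes B: "borel_ideal n B" and g: "g \<in> B" and w: "w \<in> monoms n"
    and le: "borel_le (trunc s g) w"
  shows "w \<in> trunc_ideal n s B"
proof (cases "size g \<le> s")
  case True
  then have "w \<in> B" using borel_ideal_upward[OF B g w] le by (simp add: trunc_id)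
  then show ?thesis using w trunc_subset unfolding mem_trunc_ideal by blast
next
  case False
  define w' where "w' = trunc s w"
  define tail where "tail = g - trunc s g"
  have size_head: "size (trunc s g) = s" using False by (simp add: size_trunc)
  have size_w': "size w' = s"
    using le size_head unfolding borel_le_def w'_def by (simp add: size_trunc)
  have count_w': "count_le x (trunc s g) \<le> count_le x w'" for x
    using le count_le_le_size[of x "trunc s g"] size_head
    unfolding borel_le_def w'_def by (simp add: count_le_trunc)
  have g_split: "g = trunc s g + tail"
    unfolding tail_def by (metis trunc_subset subset_mset.add_diff_inverse)
  define g' where "g' = w' + tail"
  have "g' \<in> monoms n" unfolding g'_def w'_def tail_def
    using monoms_plus monoms_subset[OF w trunc_subset] borel_ideal_subset_monoms[OF B] g
    by (metis diff_subset_eq_self monoms_subset subsetD)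
  moreover have "borel_le g g'"
    unfolding borel_le_def g'_def using size_head size_w' count_w'
    by (subst (1 2) g_split) (simp)
  ultimately have g'_in: "g' \<in> B" using borel_ideal_upward[OF B g] by blast
  have "trunc s g' = w'" unfolding g'_def
  proof (rule trunc_append[OF size_w'])
    fix y z assume y: "y \<in># w'" and z: "z \<in># tail"
    have "count_le z g = count_le z (trunc s g) + count_le z tail" using g_split by (metis count_le_plus)
    then have "count_le z (trunc s g) = s"
      using count_le_pos[OF z] count_le_trunc[of z s g] by linarith
    then have "count_le z w' = size w'"
      using count_w'[of z] size_w' count_le_le_size[of z w'] by simp
    then show "y \<le> z" using y count_le_eq_size_iff by blast
  qed
  then have "trunc s g' \<subseteq># w" using trunc_subset w'_def by simp
  then show ?thesis using g'_in w mem_trunc_ideal by blast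
qed

lemma trunc_ideal_upward:
  assumes "borel_ideal n B" "w' \<in> trunc_ideal n s B" "w \<in> monoms n" "borel_le w' w"
  shows "w \<in> trunc_ideal n s B"
proof -
  obtain g where "g \<in> B" "trunc s g \<subseteq># w'" using assms(2) mem_trunc_ideal by blast
  then show ?thesis
    using trunc_ideal_upward_gen[OF assms(1) _ assms(3)] borel_le_trans borel_le_subset assms(4)
    by blast
qed

lemma trunc_ideal_descend:
  assumes B: "borel_ideal n B" and w: "w \<in> monoms n"
    and "trunc s w \<in> trunc_ideal n s B" "t \<le> s"
  shows "trunc t w \<in> trunc_ideal n t B"
proof -
  obtain g where g: "g \<in> B" "trunc s g \<subseteq># trunc s w" using assms(3) mem_trunc_ideal by blast
  then have "borel_le (trunc t g) (trunc t w)"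
    using borel_le_trunc_mono borel_le_subset assms(4) by blast
  then show ?thesis using trunc_ideal_upward_gen[OF B g(1)] monoms_subset[OF w trunc_subset] by blast
qed

(* Since B is generated in degrees \<le> d and Borel, it contains trunc_d of its elements,
   i.e. T_d = B. *)
lemma trunc_gen_degree_in:
  assumes B: "borel_ideal n B" and gen: "generated_in_degrees_le B d" and g: "g \<in> B"
  shows "trunc d g \<in> B"
proof -
  obtain g0 where g0: "g0 \<in> B" "g0 \<subseteq># g" "size g0 \<le> d"
    using gen g unfolding generated_in_degrees_le_def by blast
  have "trunc d g \<in> monoms n"
    using monoms_subset trunc_subset borel_ideal_subset_monoms[OF B] g by blast
  then show ?thesis using borel_ideal_upward[OF B g0(1)] borel_le_trunc g0 by blast
qed

lemma trunc_ideal_low_degree: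
  assumes B: "borel_ideal n B" and "w \<in> trunc_ideal n s B" "size w < s"
  shows "w \<in> B"
proof -
  obtain g where g: "g \<in> B" "trunc s g \<subseteq># w" and w: "w \<in> monoms n"
    using assms(2) mem_trunc_ideal by blast
  have "size (trunc s g) < s" using g(2) assms(3) size_mset_mono by fastforce
  then have "trunc s g = g" by (simp add: size_trunc trunc_id)
  then show ?thesis using borel_ideal_dvd[OF B g(1) w] g(2) by simp
qed

section \<open>The cells m\<cdot>k[Z_m]\<close>

lemma Mset_props:
  "m \<in> Mset n B s \<Longrightarrow> m \<in> trunc_ideal n s B \<and> size m = s \<and> m \<notin> B \<and> m \<in> monoms n"
  unfolding Mset_def min_gens_def using mem_trunc_ideal by blast

(* Every variable of Z_m has larger index than all factors of m: otherwise m x_j would be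
   Borel above trunc_{s+1} g for a generator g \<in> B with trunc_s g = m. *)
lemma Zvars_above:
  assumes B: "borel_ideal n B" and m: "m \<in> Mset n B s" and j: "j \<in> Zvars n B s m"
    and y: "y \<in># m"
  shows "y < j"
proof (rule ccontr)
  assume "\<not> y < j"
  then have jy: "j \<le> y" by simp
  have m_props: "m \<in> trunc_ideal n s B" "size m = s" "m \<notin> B" "m \<in> monoms n"
    using Mset_props[OF m] by auto
  obtain g where g: "g \<in> B" "trunc s g \<subseteq># m" using m_props(1) mem_trunc_ideal by blast
  have "\<not> size g \<le> s"
    using borel_ideal_dvd[OF B g(1) m_props(4)] g(2) m_props(3) trunc_id by metis
  then have m_eq: "m = trunc s g"
    using subset_mset_size_eq[OF g(2)] m_props(2) by (simp add: size_trunc)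
  have jn: "j < n" and outside: "m + {#j#} \<notin> trunc_ideal n (Suc s) B"
    using j unfolding Zvars_def by auto
  have mj: "m + {#j#} \<in> monoms n" using m_props(4) jn by (simp add: monoms_def)
  have "count_le x (trunc (Suc s) g) \<le> count_le x (m + {#j#})" for x
  proof (cases "j \<le> x")
    case True
    then show ?thesis using m_eq by (simp add: count_le_trunc)
  next
    case False
    then have "count_le x m \<noteq> size m" using count_le_eq_size_iff y jy by fastforce
    then have "count_le x g < s"
      using count_le_le_size[of x m] m_props(2) m_eq by (simp add: count_le_trunc)
    then show ?thesis using False m_eq by (simp add: count_le_trunc)
  qed
  then have "borel_le (trunc (Suc s) g) (m + {#j#})"
    unfolding borel_le_def using m_props(2) by (simp add: size_trunc)
  then show False
    using trunc_ideal_upward[OF B trunc_mem_trunc_ideal[OF B g(1)] mj] outside by simp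
qed

context
  fixes n s :: nat and B :: "nat multiset set" and m v :: "nat multiset"
  assumes B: "borel_ideal n B" and m: "m \<in> Mset n B s"
    and v: "set_mset v \<subseteq> Zvars n B s m"
begin

lemma cell_elem_trunc: "trunc s (m + v) = m"
  using trunc_append Mset_props[OF m] Zvars_above[OF B m] v by (meson less_imp_le subsetD)

lemma cell_elem_monoms: "m + v \<in> monoms n"
  using Mset_props[OF m] v unfolding Zvars_def monoms_def by auto

(* The first s+1 factors of m v form m x_j with j the smallest factor of v, and m x_j is
   Borel above that truncation; since m x_j \<notin> T_{s+1}, neither is the truncation. *)
lemma cell_elem_not_next:
  assumes "v \<noteq> {#}"
  shows "trunc (Suc s) (m + v) \<notin> trunc_ideal n (Suc s) B"
proof
  assume in_next: "trunc (Suc s) (m + v) \<in> trunc_ideal n (Suc s) B"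
  define j where "j = Min (set_mset v)"
  have jv: "j \<in># v" using assms unfolding j_def by (simp add: Min_in)
  have j_min: "\<And>z. z \<in># v \<Longrightarrow> j \<le> z" unfolding j_def by simp
  have jZ: "j \<in> Zvars n B s m" using jv v by blast
  then have jn: "j < n" and outside: "m + {#j#} \<notin> trunc_ideal n (Suc s) B"
    unfolding Zvars_def by auto
  have m_props: "size m = s" "m \<in> monoms n" using Mset_props[OF m] by auto
  have mj: "m + {#j#} \<in> monoms n" using m_props(2) jn by (simp add: monoms_def)
  have "count_le x (trunc (Suc s) (m + v)) \<le> count_le x (m + {#j#})" for x
  proof (cases "j \<le> x")
    case True
    then have "count_le x m = size m"
      using Zvars_above[OF B m jZ] count_le_eq_size_iff by fastforce
    then show ?thesis using m_props(1) True by (simp add: count_le_trunc)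
  next
    case False
    then have "count_le x v = 0" using j_min by (intro count_le_zero) (meson le_trans not_le)
    then show ?thesis using False by (simp add: count_le_trunc)
  qed
  then have "borel_le (trunc (Suc s) (m + v)) (m + {#j#})"
    unfolding borel_le_def using m_props(1) by (simp add: size_trunc)
  then show False using trunc_ideal_upward[OF B in_next mj] outside by simp
qed

lemma cell_elem_not_in_B: "m + v \<notin> B"
proof
  assume in_B: "m + v \<in> B"
  show False
  proof (cases "v = {#}")
    case True
    then show False using in_B Mset_props[OF m] by simp
  next
    case False
    then show False
      using cell_elem_not_next trunc_mem_trunc_ideal[OF B in_B] by simp
  qed
qed

end

lemma cell_subset_complement:
  assumes "borel_ideal n B" "m \<in> Mset n B s"
  shows "cell m (Zvars n B s m) \<subseteq> {u \<in> monoms n. u \<notin> B}"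
  using cell_elem_monoms[OF assms] cell_elem_not_in_B[OF assms] unfolding cell_def by blast

(* Every monomial outside B lies in the cell of m = trunc_s u, s maximal with
   trunc_s u \<in> T_s. *)
lemma complement_covered_by_cells:
  assumes B: "borel_ideal n B" and ne: "B \<noteq> {}" and gen: "generated_in_degrees_le B d"
    and u: "u \<in> monoms n" and u_notin: "u \<notin> B"
  shows "\<exists>s<d. \<exists>m\<in>Mset n B s. u \<in> cell m (Zvars n B s m)"
proof -
  define P where "P = (\<lambda>s. trunc s u \<in> trunc_ideal n s B)"
  have trunc_u: "\<And>t. trunc t u \<in> monoms n" using monoms_subset[OF u trunc_subset] .
  have P0: "P 0"
  proof -
    obtain g where "g \<in> B" using ne by blast
    moreover have "trunc 0 g = trunc 0 u" by (simp add: trunc_def)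
    ultimately show ?thesis unfolding P_def using trunc_mem_trunc_ideal[OF B] by metis
  qed
  have P_below_d: "s < d" if "P s" for s
  proof (rule ccontr)
    assume "\<not> s < d"
    then have "P d" using trunc_ideal_descend[OF B u] that unfolding P_def by simp
    then obtain g where g: "g \<in> B" "trunc d g \<subseteq># trunc d u"
      unfolding P_def using mem_trunc_ideal by blast
    then have "trunc d u \<in> B"
      using trunc_gen_degree_in[OF B gen] borel_ideal_dvd[OF B _ trunc_u] by blast
    then show False using borel_ideal_dvd[OF B _ u trunc_subset] u_notin by blast
  qed
  have P_size: "s \<le> size u" if Ps: "P s" for s
  proof (rule ccontr)
    assume "\<not> s \<le> size u"
    then have "trunc s u = u" "size u < s" by (simp_all add: trunc_id)
    then have "u \<in> B" using trunc_ideal_low_degree[OF B] Ps unfolding P_def by simp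
    then show False using u_notin by simp
  qed
  define s where "s = Greatest P"
  have Ps: "P s"
    unfolding s_def using GreatestI_nat[of P 0 d] P0 P_below_d by (meson less_imp_le)
  have P_max: "t \<le> s" if "P t" for t
    unfolding s_def using Greatest_le_nat[of P t d] that P_below_d by (meson less_imp_le)
  define m where "m = trunc s u"
  define v where "v = u - m"
  have size_m: "size m = s" using P_size[OF Ps] unfolding m_def by (simp add: size_trunc)
  have m_T: "m \<in> trunc_ideal n s B" using Ps unfolding P_def m_def .
  have m_monoms: "m \<in> monoms n" using trunc_u m_def by simp
  have m_notin: "m \<notin> B" using borel_ideal_dvd[OF B _ u trunc_subset] u_notin m_def by blast
  have u_eq: "u = m + v"
    unfolding v_def m_def by (metis trunc_subset subset_mset.add_diff_inverse)
  have "m' = m" if "m' \<in> trunc_ideal n s B" "m' \<subseteq># m" for m'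
  proof -
    have "\<not> size m' < s"
      using trunc_ideal_low_degree[OF B that(1)] borel_ideal_dvd[OF B _ m_monoms that(2)]
        m_notin by blast
    then show ?thesis using subset_mset_size_eq[OF that(2)] size_m by simp
  qed
  then have m_M: "m \<in> Mset n B s"
    unfolding Mset_def min_gens_def using m_T size_m m_notin by blast
  have "j \<in> Zvars n B s m" if jv: "j \<in># v" for j
  proof -
    have jn: "j < n" using jv u u_eq unfolding monoms_def by auto
    have "m + {#j#} \<notin> trunc_ideal n (Suc s) B"
    proof
      assume "m + {#j#} \<in> trunc_ideal n (Suc s) B"
      moreover have "borel_le (m + {#j#}) (trunc (Suc s) u)"
        using borel_le_trunc[of "m + {#j#}" u "Suc s"] jv u_eq size_m by simp
      ultimately have "P (Suc s)" using trunc_ideal_upward[OF B _ trunc_u] unfolding P_def by blast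
      then show False using P_max by fastforce
    qed
    then show ?thesis unfolding Zvars_def using jn by simp
  qed
  then have "u \<in> cell m (Zvars n B s m)" unfolding cell_def using u_eq by blast
  then show ?thesis using P_below_d[OF Ps] m_M by blast
qed

(* Cells of different degrees s < s' are disjoint: an element of the s'-cell has its
   (s+1)-truncation in T_{s+1}, whereas in the s-cell only m itself does. *)
lemma cells_disjoint_degree:
  assumes B: "borel_ideal n B" and m: "m \<in> Mset n B s" and m': "m' \<in> Mset n B s'"
    and "s < s'"
  shows "cell m (Zvars n B s m) \<inter> cell m' (Zvars n B s' m') = {}"
proof (rule ccontr)
  assume "cell m (Zvars n B s m) \<inter> cell m' (Zvars n B s' m') \<noteq> {}"
  then obtain x where x: "x \<in> cell m (Zvars n B s m)" "x \<in> cell m' (Zvars n B s' m')"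
    by blast
  obtain v where v: "set_mset v \<subseteq> Zvars n B s m" and x_eq: "x = m + v"
    using x(1) unfolding cell_def by blast
  obtain v' where v': "set_mset v' \<subseteq> Zvars n B s' m'" and x_eq': "x = m' + v'"
    using x(2) unfolding cell_def by blast
  have eq: "m + v = m' + v'" using x_eq x_eq' by simp
  have "size (m + v) = s + size v" "size (m' + v') = s' + size v'"
    using Mset_props[OF m] Mset_props[OF m'] by auto
  then have "v \<noteq> {#}" using eq \<open>s < s'\<close> by auto
  have "trunc s' (m + v) \<in> trunc_ideal n s' B"
    using eq cell_elem_trunc[OF B m' v'] Mset_props[OF m'] by simp
  then have "trunc (Suc s) (m + v) \<in> trunc_ideal n (Suc s) B"
    using trunc_ideal_descend[OF B cell_elem_monoms[OF B m v]] \<open>s < s'\<close> by simp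
  then show False using cell_elem_not_next[OF B m v \<open>v \<noteq> {#}\<close>] by simp
qed

(* Cells of the same degree s are disjoint since trunc_s recovers m. *)
lemma cells_disjoint_same_degree:
  assumes B: "borel_ideal n B" and m: "m \<in> Mset n B s" and m': "m' \<in> Mset n B s"
    and "m \<noteq> m'"
  shows "cell m (Zvars n B s m) \<inter> cell m' (Zvars n B s m') = {}"
proof -
  have "trunc s x = m" if "x \<in> cell m (Zvars n B s m)" for x
    using that cell_elem_trunc[OF B m] unfolding cell_def by blast
  moreover have "trunc s x = m'" if "x \<in> cell m' (Zvars n B s m')" for x
    using that cell_elem_trunc[OF B m'] unfolding cell_def by blast
  ultimately show ?thesis using \<open>m \<noteq> m'\<close> by blast
qed

lemma cells_disjoint:
  assumes "borel_ideal n B"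
  shows "disjoint_family_on (\<lambda>(s, m). cell m (Zvars n B s m)) (SIGMA s:S. Mset n B s)"
  unfolding disjoint_family_on_def
proof (clarsimp)
  fix s m s' m'
  assume m: "m \<in> Mset n B s" and m': "m' \<in> Mset n B s'" and ne: "s = s' \<longrightarrow> m \<noteq> m'"
  show "cell m (Zvars n B s m) \<inter> cell m' (Zvars n B s' m') = {}"
  proof (cases s s' rule: linorder_cases)
    case less
    then show ?thesis using cells_disjoint_degree[OF assms m m'] by blast
  next
    case equal
    then show ?thesis using cells_disjoint_same_degree[OF assms m] m' ne by blast
  next
    case greater
    then show ?thesis using cells_disjoint_degree[OF assms m' m] by blast
  qed
qed

theorem theorem4p1:
  fixes n d :: nat and B :: "nat multiset set"
  assumes "borel_ideal n B"
    and "B \<noteq> {}"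
    and "{#} \<notin> B"
    and "generated_in_degrees_le B d"
  shows "{u \<in> monoms n. u \<notin> B} =
           (\<Union>s\<in>{..<d}. \<Union>m\<in>Mset n B s. cell m (Zvars n B s m))
    \<and> disjoint_family_on (\<lambda>(s, m). cell m (Zvars n B s m))
                          (SIGMA s:{..<d}. Mset n B s)"
proof
  show "{u \<in> monoms n. u \<notin> B} = (\<Union>s\<in>{..<d}. \<Union>m\<in>Mset n B s. cell m (Zvars n B s m))"
  proof
    show "{u \<in> monoms n. u \<notin> B} \<subseteq> (\<Union>s\<in>{..<d}. \<Union>m\<in>Mset n B s. cell m (Zvars n B s m))"
      using complement_covered_by_cells[OF assms(1,2,4)] by blast
    show "(\<Union>s\<in>{..<d}. \<Union>m\<in>Mset n B s. cell m (Zvars n B s m)) \<subseteq> {u \<in> monoms n. u \<notin> B}"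
      using cell_subset_complement[OF assms(1)] by blast
  qed
  show "disjoint_family_on (\<lambda>(s, m). cell m (Zvars n B s m)) (SIGMA s:{..<d}. Mset n B s)"
    using cells_disjoint[OF assms(1)] .
qed

end
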